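(* Let $N$ be the coarse-grained compartment model with internal chemistry $0\to S$ (rate constant $\kappa_b\ge0$), $S\to0$ (rate constant $\kappa_d\ge0$), compartment parameters $\kappa_I,\kappa_E,\kappa_F,\kappa_C\ge0$, inflow distribution $\mu$ on $\mathbb Z_{\ge0}$ with $\lambda:=\sum_xx\mu(x)<\infty$, and arbitrary fragmentation kernel $\psi$. If $(\kappa_F-\kappa_E)\kappa_b>(\kappa_E+\kappa_d)\kappa_E$, $\kappa_I>0$ and $\kappa_C=0$, then all states are transient for $N$.
   Context: The state space of $N$ is $\mathcal N=\{n:\mathbb Z_{\ge0}\to\mathbb Z_{\ge0}\text{ finitely supported}\}$, where $n_x$ is the number of compartments containing exactly $x$ molecules of $S$; $e_x$ is the indicator of $x$. The kernel $\psi$ satisfies $\psi(x,y)=0$ for $y>x$ and $y\mapsto\psi(x,y)$ is a probability measure for each $x$. $N$ is the continuous-time Markov chain with generator $\mathcal LV(n)=\sum_{x=0}^\infty\Big[\kappa_bn_x\big(V(n-e_x+e_{x+1})-V(n)\big)+\kappa_dn_xx\big(V(n-e_x+e_{x-1})-V(n)\big)+\kappa_I\mu(x)\big(V(n+e_x)-V(n)\big)+\kappa_En_x\big(V(n-e_x)-V(n)\big)+\kappa_Fxn_x\sum_{y=0}^\infty\psi(x,y)\big(V(n-e_x+e_y+e_{x-y})-V(n)\big)+\kappa_C\binom{n_x}2\big(V(n-2e_x+e_{2x})-V(n)\big)+\sum_{y\ne x}\kappa_C\frac{n_xn_y}2\big(V(n-e_x-e_y+e_{x+y})-V(n)\big)\Big]$.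 *)

theory Defs
  imports "HOL-Probability.Probability" "HOL-Library.Multiset"
begin

text \<open>States: a finitely supported function n : nat -> nat is represented as a
  multiset of naturals, with n_x = count n x and e_x = {#x#}.\<close>

type_synonym cstate = "nat multiset"

definition ind :: "bool \<Rightarrow> ennreal" where
  "ind P = (if P then 1 else 0)"

definition rate ::
  "real \<Rightarrow> real \<Rightarrow> real \<Rightarrow> real \<Rightarrow> real \<Rightarrow> real \<Rightarrow> (nat \<Rightarrow> real) \<Rightarrow> (nat \<Rightarrow> nat \<Rightarrow> real)
    \<Rightarrow> cstate \<Rightarrow> cstate \<Rightarrow> ennreal" where
  "rate kb kd kI kE kF kC \<mu> \<psi> n m =
     (\<Sum>x. ennreal (kb * real (count n x)) * ind (m = n - {#x#} + {#Suc x#}))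
   + (\<Sum>x. ennreal (kd * real (count n x) * real x) * ind (m = n - {#x#} + {#x - 1#}))
   + (\<Sum>x. ennreal (kI * \<mu> x) * ind (m = n + {#x#}))
   + (\<Sum>x. ennreal (kE * real (count n x)) * ind (m = n - {#x#}))
   + (\<Sum>x. ennreal (kF * real x * real (count n x)) *
           (\<Sum>y. ennreal (\<psi> x y) * ind (m = n - {#x#} + {#y#} + {#x - y#})))
   + (\<Sum>x. ennreal (kC * real (count n x choose 2)) * ind (m = n - {#x#} - {#x#} + {#2 * x#}))
   + (\<Sum>x. \<Sum>y. if y \<noteq> x then ennreal (kC * real (count n x) * real (count n y) / 2)
                          * ind (m = n - {#x#} - {#y#} + {#x + y#}) else 0)"

definition total_rate ::
  "real \<Rightarrow> real \<Rightarrow> real \<Rightarrow> real \<Rightarrow> real \<Rightarrow> real \<Rightarrow> (nat \<Rightarrow> real) \<Rightarrow> (nat \<Rightarrow> nat \<Rightarrow> real)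
    \<Rightarrow> cstate \<Rightarrow> ennreal" where
  "total_rate kb kd kI kE kF kC \<mu> \<psi> n =
     (\<integral>\<^sup>+ m. rate kb kd kI kE kF kC \<mu> \<psi> n m * ind (m \<noteq> n) \<partial>count_space UNIV)"

text \<open>Transition probabilities of the embedded jump chain (absorbing if total rate is 0).\<close>
definition jump_prob ::
  "real \<Rightarrow> real \<Rightarrow> real \<Rightarrow> real \<Rightarrow> real \<Rightarrow> real \<Rightarrow> (nat \<Rightarrow> real) \<Rightarrow> (nat \<Rightarrow> nat \<Rightarrow> real)
    \<Rightarrow> cstate \<Rightarrow> cstate \<Rightarrow> ennreal" where
  "jump_prob kb kd kI kE kF kC \<mu> \<psi> n m =
     (if total_rate kb kd kI kE kF kC \<mu> \<psi> n = 0 then ind (m = n)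
      else rate kb kd kI kE kF kC \<mu> \<psi> n m * ind (m \<noteq> n) / total_rate kb kd kI kE kF kC \<mu> \<psi> n)"

text \<open>First-passage probabilities of a discrete-time kernel P: probability, starting
  from a, that the first visit to b (at a positive time) happens at step k.\<close>
fun first_passage :: "('s \<Rightarrow> 's \<Rightarrow> ennreal) \<Rightarrow> nat \<Rightarrow> 's \<Rightarrow> 's \<Rightarrow> ennreal" where
  "first_passage P 0 a b = 0"
| "first_passage P (Suc 0) a b = P a b"
| "first_passage P (Suc (Suc k)) a b =
     (\<integral>\<^sup>+ c. P a c * ind (c \<noteq> b) * first_passage P (Suc k) c b \<partial>count_space UNIV)"

definition return_prob :: "('s \<Rightarrow> 's \<Rightarrow> ennreal) \<Rightarrow> 's \<Rightarrow> ennreal" where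
  "return_prob P a = (\<Sum>k. first_passage P k a a)"

definition transient_state :: "('s \<Rightarrow> 's \<Rightarrow> ennreal) \<Rightarrow> 's \<Rightarrow> bool" where
  "transient_state P a \<longleftrightarrow> return_prob P a < 1"

end

theory Submission
  imports Defs
begin

text \<open>
  The jump chain has a positive, strictly superharmonic function of product form
  \<open>W n = (\<Prod>z\<in>#n. f z)\<close> with \<open>f 0 = s0\<close> and \<open>f x = s1\<close> for \<open>x > 0\<close>,
  where \<open>0 < s1 \<le> s0 < 1\<close>. Since \<open>W\<close> is multiplicative over compartments, every
  internal event (birth, death, exit, fragmentation) changes \<open>W\<close> through a single
  compartment, and the condition \<open>(kF - kE) kb > (kE + kd) kE\<close> allows choosing
  \<open>s0, s1\<close> so that the expected change caused by each compartment is nonpositive.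
  Inflow, which happens at rate \<open>kI > 0\<close>, multiplies \<open>W\<close> by at most \<open>s0 < 1\<close>, so
  \<open>P W < W\<close> everywhere. For a superharmonic \<open>g\<close> the return probability to \<open>a\<close> is at most
  \<open>(P g) a / g a\<close>, hence below \<open>1\<close>.
\<close>

lemma nn_integral_ind_eq:
  "(\<integral>\<^sup>+ m. ind (m = t) * h m \<partial>count_space UNIV) = h t"
proof -
  have "(\<lambda>m. ind (m = t) * h m) = (\<lambda>m. h t * indicator {t} m)"
    by (auto simp: ind_def fun_eq_iff)
  then show ?thesis by (simp add: nn_integral_cmult_indicator)
qed

lemma nn_integral_split_at:
  "(\<integral>\<^sup>+ d. P d * h d \<partial>count_space UNIV)
     = P a * h a + (\<integral>\<^sup>+ d. P d * ind (d \<noteq> a) * h d \<partial>count_space UNIV)"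
proof -
  have "(\<integral>\<^sup>+ d. P d * h d \<partial>count_space UNIV)
      = (\<integral>\<^sup>+ d. ind (d = a) * (P d * h d) + P d * ind (d \<noteq> a) * h d \<partial>count_space UNIV)"
    by (rule nn_integral_cong) (simp add: ind_def)
  also have "\<dots> = P a * h a + (\<integral>\<^sup>+ d. P d * ind (d \<noteq> a) * h d \<partial>count_space UNIV)"
    by (simp add: nn_integral_add nn_integral_ind_eq)
  finally show ?thesis .
qed

lemma sum_first_passage_Suc:
  "(\<Sum>k<Suc (Suc K). first_passage P k c a) = P c a
     + (\<integral>\<^sup>+ d. P c d * ind (d \<noteq> a) * (\<Sum>k<Suc K. first_passage P k d a) \<partial>count_space UNIV)"
proof -
  have "(\<Sum>k<Suc (Suc K). first_passage P k c a) = P c a + (\<Sum>k<K. first_passage P (Suc (Suc k)) c a)"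
    by (simp only: sum.lessThan_Suc_shift) simp
  also have "(\<Sum>k<K. first_passage P (Suc (Suc k)) c a)
      = (\<integral>\<^sup>+ d. (\<Sum>k<K. P c d * ind (d \<noteq> a) * first_passage P (Suc k) d a) \<partial>count_space UNIV)"
    by (simp add: nn_integral_sum)
  also have "\<dots> = (\<integral>\<^sup>+ d. P c d * ind (d \<noteq> a) * (\<Sum>k<Suc K. first_passage P k d a) \<partial>count_space UNIV)"
    by (simp only: sum.lessThan_Suc_shift) (simp add: sum_distrib_left)
  finally show ?thesis .
qed

lemma return_prob_mult_le:
  fixes P :: "'s \<Rightarrow> 's \<Rightarrow> ennreal" and g :: "'s \<Rightarrow> ennreal"
  assumes superharmonic: "\<And>c. (\<integral>\<^sup>+ d. P c d * g d \<partial>count_space UNIV) \<le> g c"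
  shows "return_prob P a * g a \<le> (\<integral>\<^sup>+ d. P a d * g d \<partial>count_space UNIV)"
proof -
  define S where "S K c = (\<Sum>k<Suc K. first_passage P k c a)" for K c
  have partial: "S K c * g a \<le> (\<integral>\<^sup>+ d. P c d * g d \<partial>count_space UNIV)" for K c
  proof (induction K arbitrary: c)
    case 0
    then show ?case by (simp add: S_def)
  next
    case (Suc K)
    have "S (Suc K) c * g a
        = P c a * g a + (\<integral>\<^sup>+ d. P c d * ind (d \<noteq> a) * S K d \<partial>count_space UNIV) * g a"
      unfolding S_def sum_first_passage_Suc by (simp add: distrib_right)
    also have "\<dots> = P c a * g a + (\<integral>\<^sup>+ d. P c d * ind (d \<noteq> a) * (S K d * g a) \<partial>count_space UNIV)"
      using nn_integral_multc[of "\<lambda>d. P c d * ind (d \<noteq> a) * S K d" "count_space UNIV" "g a"]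
      by (simp add: mult.assoc)
    also have "\<dots> \<le> P c a * g a + (\<integral>\<^sup>+ d. P c d * ind (d \<noteq> a) * g d \<partial>count_space UNIV)"
      using order_trans[OF Suc.IH superharmonic] by (intro add_left_mono nn_integral_mono mult_left_mono) simp_all
    also have "\<dots> = (\<integral>\<^sup>+ d. P c d * g d \<partial>count_space UNIV)"
      by (rule nn_integral_split_at[symmetric])
    finally show ?case .
  qed
  have "(\<Sum>k<N. first_passage P k a a * g a) \<le> (\<integral>\<^sup>+ d. P a d * g d \<partial>count_space UNIV)" for N
  proof -
    have "(\<Sum>k<N. first_passage P k a a) \<le> S N a"
      unfolding S_def by (rule sum_mono2) auto
    then show ?thesis
      unfolding sum_distrib_right[symmetric] by (rule order_trans[OF mult_right_mono partial]) simp
  qed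
  then have "(\<Sum>k. first_passage P k a a * g a) \<le> (\<integral>\<^sup>+ d. P a d * g d \<partial>count_space UNIV)"
    using ennreal_suminf_bound_add[where y = 0] by (simp del: ennreal_suminf_multc)
  then show ?thesis by (simp add: return_prob_def)
qed

lemma transient_stateI_superharmonic:
  fixes P :: "'s \<Rightarrow> 's \<Rightarrow> ennreal" and g :: "'s \<Rightarrow> ennreal"
  assumes "\<And>c. (\<integral>\<^sup>+ d. P c d * g d \<partial>count_space UNIV) \<le> g c"
    and "(\<integral>\<^sup>+ d. P a d * g d \<partial>count_space UNIV) < g a"
  shows "transient_state P a"
proof (rule ccontr)
  assume "\<not> transient_state P a"
  then have "1 * g a \<le> return_prob P a * g a"
    unfolding transient_state_def by (intro mult_right_mono) auto
  also have "\<dots> \<le> (\<integral>\<^sup>+ d. P a d * g d \<partial>count_space UNIV)"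
    using assms(1) by (rule return_prob_mult_le)
  finally show False using assms(2) by simp
qed

lemma nn_integral_jump_prob_less:
  assumes T0: "total_rate kb kd kI kE kF kC \<mu> \<psi> n \<noteq> 0"
    and T_fin: "total_rate kb kd kI kE kF kC \<mu> \<psi> n \<noteq> \<top>"
    and less: "(\<integral>\<^sup>+ m. rate kb kd kI kE kF kC \<mu> \<psi> n m * ind (m \<noteq> n) * g m \<partial>count_space UNIV)
      < total_rate kb kd kI kE kF kC \<mu> \<psi> n * g n"
  shows "(\<integral>\<^sup>+ m. jump_prob kb kd kI kE kF kC \<mu> \<psi> n m * g m \<partial>count_space UNIV) < g n"
proof -
  let ?T = "total_rate kb kd kI kE kF kC \<mu> \<psi> n"
  have "(\<integral>\<^sup>+ m. jump_prob kb kd kI kE kF kC \<mu> \<psi> n m * g m \<partial>count_space UNIV)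
      = (\<integral>\<^sup>+ m. rate kb kd kI kE kF kC \<mu> \<psi> n m * ind (m \<noteq> n) * g m \<partial>count_space UNIV) / ?T"
    using T0 by (simp add: jump_prob_def ennreal_times_divide nn_integral_divide[symmetric] ac_simps)
  also have "\<dots> < g n"
    using less T0 T_fin by (simp add: divide_less_ennreal top.not_eq_extremum mult.commute)
  finally show ?thesis .
qed

lemma nn_integral_suminf_ind:
  "(\<integral>\<^sup>+ m. (\<Sum>x. c x * ind (m = t x)) * h m \<partial>count_space UNIV) = (\<Sum>x. c x * h (t x))"
proof -
  have "(\<integral>\<^sup>+ m. (\<Sum>x. c x * ind (m = t x)) * h m \<partial>count_space UNIV)
      = (\<Sum>x. \<integral>\<^sup>+ m. c x * (ind (m = t x) * h m) \<partial>count_space UNIV)"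
    by (simp add: nn_integral_suminf mult.assoc flip: ennreal_suminf_multc)
  also have "\<dots> = (\<Sum>x. c x * h (t x))"
    by (simp add: nn_integral_cmult nn_integral_ind_eq)
  finally show ?thesis .
qed

lemma nn_integral_suminf_suminf_ind:
  "(\<integral>\<^sup>+ m. (\<Sum>x. c x * (\<Sum>y. d x y * ind (m = t x y))) * h m \<partial>count_space UNIV)
    = (\<Sum>x. c x * (\<Sum>y. d x y * h (t x y)))"
proof -
  have "(\<integral>\<^sup>+ m. (\<Sum>x. c x * (\<Sum>y. d x y * ind (m = t x y))) * h m \<partial>count_space UNIV)
      = (\<Sum>x. \<integral>\<^sup>+ m. c x * ((\<Sum>y. d x y * ind (m = t x y)) * h m) \<partial>count_space UNIV)"
    by (simp add: nn_integral_suminf mult.assoc flip: ennreal_suminf_multc)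
  also have "\<dots> = (\<Sum>x. c x * (\<Sum>y. d x y * h (t x y)))"
    by (simp add: nn_integral_cmult nn_integral_suminf_ind)
  finally show ?thesis .
qed

locale compartment_model =
  fixes kb kd kI kE kF :: real and \<mu> :: "nat \<Rightarrow> real" and \<psi> :: "nat \<Rightarrow> nat \<Rightarrow> real"
  assumes rates_nonneg: "0 \<le> kb" "0 \<le> kd" "0 \<le> kI" "0 \<le> kE" "0 \<le> kF"
    and mu_nonneg: "0 \<le> \<mu> x" and mu_sums: "\<mu> sums 1"
    and psi_nonneg: "0 \<le> \<psi> x y" and psi_supp: "x < y \<Longrightarrow> \<psi> x y = 0"
    and psi_sum: "(\<Sum>y\<le>x. \<psi> x y) = 1"
begin

abbreviation Q :: "cstate \<Rightarrow> cstate \<Rightarrow> ennreal" where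
  "Q \<equiv> rate kb kd kI kE kF 0 \<mu> \<psi>"

abbreviation q :: "cstate \<Rightarrow> ennreal" where
  "q \<equiv> total_rate kb kd kI kE kF 0 \<mu> \<psi>"

abbreviation P :: "cstate \<Rightarrow> cstate \<Rightarrow> ennreal" where
  "P \<equiv> jump_prob kb kd kI kE kF 0 \<mu> \<psi>"

definition rate_summand :: "cstate \<Rightarrow> (cstate \<Rightarrow> real) \<Rightarrow> nat \<Rightarrow> real" where
  "rate_summand n h x =
     kI * \<mu> x * h (n + {#x#})
     + real (count n x) * (kb * h (n - {#x#} + {#Suc x#}) + kd * real x * h (n - {#x#} + {#x - 1#})
         + kE * h (n - {#x#}) + kF * real x * (\<Sum>y\<le>x. \<psi> x y * h (n - {#x#} + {#y#} + {#x - y#})))"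

lemma rate_summand_nonneg:
  assumes "\<And>m. 0 \<le> h m"
  shows "0 \<le> rate_summand n h x"
  unfolding rate_summand_def using assms rates_nonneg mu_nonneg psi_nonneg by (simp add: sum_nonneg)

lemma nn_integral_Q_eq_suminf:
  assumes h_nonneg: "\<And>m. 0 \<le> h m"
  shows "(\<integral>\<^sup>+ m. Q n m * ennreal (h m) \<partial>count_space UNIV) = (\<Sum>x. ennreal (rate_summand n h x))"
proof -
  let ?c = "\<lambda>x. real (count n x)"
  have fragments: "(\<Sum>y. ennreal (\<psi> x y) * ennreal (h (n - {#x#} + {#y#} + {#x - y#})))
      = ennreal (\<Sum>y\<le>x. \<psi> x y * h (n - {#x#} + {#y#} + {#x - y#}))" for x
  proof -
    have "(\<Sum>y. ennreal (\<psi> x y) * ennreal (h (n - {#x#} + {#y#} + {#x - y#})))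
        = (\<Sum>y\<le>x. ennreal (\<psi> x y) * ennreal (h (n - {#x#} + {#y#} + {#x - y#})))"
      by (rule suminf_finite) (auto simp: psi_supp)
    then show ?thesis by (simp add: psi_nonneg h_nonneg flip: ennreal_mult)
  qed
  have "(\<integral>\<^sup>+ m. Q n m * ennreal (h m) \<partial>count_space UNIV)
      = (\<Sum>x. ennreal (kb * ?c x) * ennreal (h (n - {#x#} + {#Suc x#})))
      + (\<Sum>x. ennreal (kd * ?c x * real x) * ennreal (h (n - {#x#} + {#x - 1#})))
      + (\<Sum>x. ennreal (kI * \<mu> x) * ennreal (h (n + {#x#})))
      + (\<Sum>x. ennreal (kE * ?c x) * ennreal (h (n - {#x#})))
      + (\<Sum>x. ennreal (kF * real x * ?c x) *
           (\<Sum>y. ennreal (\<psi> x y) * ennreal (h (n - {#x#} + {#y#} + {#x - y#}))))"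
  proof -
    have no_coalescence: "(\<lambda>y. if y \<noteq> x then ennreal (0 * real (count n x) * real (count n y) / 2) * i y else 0)
        = (\<lambda>y. 0)" for x and i :: "nat \<Rightarrow> ennreal"
      by auto
    show ?thesis
      unfolding rate_def
      by (simp add: no_coalescence distrib_right nn_integral_add nn_integral_suminf_ind
          nn_integral_suminf_suminf_ind)
  qed
  also have "\<dots> = (\<Sum>x. ennreal (kb * ?c x) * ennreal (h (n - {#x#} + {#Suc x#}))
      + ennreal (kd * ?c x * real x) * ennreal (h (n - {#x#} + {#x - 1#}))
      + ennreal (kI * \<mu> x) * ennreal (h (n + {#x#}))
      + ennreal (kE * ?c x) * ennreal (h (n - {#x#}))
      + ennreal (kF * real x * ?c x) *
           (\<Sum>y. ennreal (\<psi> x y) * ennreal (h (n - {#x#} + {#y#} + {#x - y#}))))"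
    by (simp add: suminf_add[OF summableI summableI])
  also have "\<dots> = (\<Sum>x. ennreal (rate_summand n h x))"
    unfolding fragments rate_summand_def
    by (simp add: rates_nonneg mu_nonneg psi_nonneg h_nonneg sum_nonneg algebra_simps
        flip: ennreal_mult ennreal_plus)
  finally show ?thesis .
qed

lemma Q_self_eq_0: "Q n n = 0"
proof -
  define h where "h m = (if m = n then 1 else 0 :: real)" for m
  have "rate_summand n h x = 0" for x
  proof (cases "x \<in># n")
    case True
    then obtain n' where "n = add_mset x n'" by (metis multi_member_split)
    then show ?thesis by (auto simp: rate_summand_def h_def)
  next
    case False
    then show ?thesis by (simp add: rate_summand_def h_def not_in_iff)
  qed
  moreover have "Q n n = (\<integral>\<^sup>+ m. Q n m * ennreal (h m) \<partial>count_space UNIV)"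
  proof -
    have "(\<lambda>m. Q n m * ennreal (h m)) = (\<lambda>m. ind (m = n) * Q n m)"
      by (auto simp: h_def ind_def)
    then show ?thesis by (simp add: nn_integral_ind_eq)
  qed
  moreover have "0 \<le> h m" for m
    by (simp add: h_def)
  ultimately show ?thesis
    by (simp add: nn_integral_Q_eq_suminf)
qed

lemma Q_mult_ind_neq_self: "Q n m * ind (m \<noteq> n) = Q n m"
  using Q_self_eq_0 by (cases "m = n") (simp_all add: ind_def)

lemma q_eq_suminf: "q n = (\<Sum>x. ennreal (rate_summand n (\<lambda>_. 1) x))"
proof -
  have "q n = (\<integral>\<^sup>+ m. Q n m * ennreal 1 \<partial>count_space UNIV)"
    by (simp add: total_rate_def Q_mult_ind_neq_self)
  also have "\<dots> = (\<Sum>x. ennreal (rate_summand n (\<lambda>_. 1) x))"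
    by (rule nn_integral_Q_eq_suminf) simp
  finally show ?thesis .
qed

lemma summable_rate_summand_one: "summable (rate_summand n (\<lambda>_. 1))"
proof -
  have "summable (\<lambda>x. kI * \<mu> x)"
    using mu_sums by (intro summable_mult) (auto simp: sums_iff)
  moreover have "summable (\<lambda>x. real (count n x) * (kb + kd * real x + kE + kF * real x * (\<Sum>y\<le>x. \<psi> x y)))"
    by (rule summable_finite[of "set_mset n"]) (auto simp: not_in_iff)
  ultimately show ?thesis
    unfolding rate_summand_def by (simp add: summable_add algebra_simps)
qed

text \<open>Exit contributes \<open>kE * 1\<close>: the factor of the leaving compartment disappears.\<close>

definition single_compartment_superharmonic :: "(nat \<Rightarrow> real) \<Rightarrow> bool" where
  "single_compartment_superharmonic f \<longleftrightarrow> (\<forall>x.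
     kb * f (Suc x) + kd * real x * f (x - 1) + kE + kF * real x * (\<Sum>y\<le>x. \<psi> x y * (f y * f (x - y)))
       \<le> (kb + kd * real x + kE + kF * real x) * f x)"

lemma rate_summand_prod_mset_le:
  fixes f :: "nat \<Rightarrow> real"
  assumes f_nonneg: "\<And>x. 0 \<le> f x" and f_le: "\<And>x. f x \<le> s"
    and compartment: "single_compartment_superharmonic f"
  shows "rate_summand n (\<lambda>m. \<Prod>z\<in>#m. f z) x + kI * (1 - s) * \<mu> x * (\<Prod>z\<in>#n. f z)
    \<le> rate_summand n (\<lambda>_. 1) x * (\<Prod>z\<in>#n. f z)"
proof -
  define W where "W m = (\<Prod>z\<in>#m. f z)" for m
  define w where "w = W (n - {#x#})"
  have W_nonneg: "0 \<le> W m" for m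
    unfolding W_def by (induction m) (simp_all add: f_nonneg)
  have inflow: "kI * \<mu> x * W (n + {#x#}) + kI * (1 - s) * \<mu> x * W n \<le> kI * \<mu> x * W n"
  proof -
    have "kI * \<mu> x * W n * (f x + (1 - s)) \<le> kI * \<mu> x * W n * 1"
      using f_le[of x] rates_nonneg mu_nonneg W_nonneg by (intro mult_left_mono) simp_all
    then show ?thesis by (simp add: W_def algebra_simps)
  qed
  have fragments: "(\<Sum>y\<le>x. \<psi> x y * W (n - {#x#} + {#y#} + {#x - y#}))
      = w * (\<Sum>y\<le>x. \<psi> x y * (f y * f (x - y)))"
    by (simp add: W_def w_def sum_distrib_left ac_simps)
  have jumps: "kb * W (n - {#x#} + {#Suc x#}) + kd * real x * W (n - {#x#} + {#x - 1#})
        + kE * W (n - {#x#}) + kF * real x * (\<Sum>y\<le>x. \<psi> x y * W (n - {#x#} + {#y#} + {#x - y#}))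
      = w * (kb * f (Suc x) + kd * real x * f (x - 1) + kE
        + kF * real x * (\<Sum>y\<le>x. \<psi> x y * (f y * f (x - y))))"
    unfolding fragments by (simp add: W_def w_def algebra_simps)
  have "real (count n x) * (kb * W (n - {#x#} + {#Suc x#}) + kd * real x * W (n - {#x#} + {#x - 1#})
        + kE * W (n - {#x#}) + kF * real x * (\<Sum>y\<le>x. \<psi> x y * W (n - {#x#} + {#y#} + {#x - y#})))
      \<le> real (count n x) * (kb + kd * real x + kE + kF * real x) * W n"
  proof (cases "x \<in># n")
    case True
    then have "W n = f x * w"
      unfolding W_def w_def by (metis insert_DiffM prod_mset.insert image_mset_add_mset)
    then have rhs: "real (count n x) * (kb + kd * real x + kE + kF * real x) * W n
        = real (count n x) * (w * ((kb + kd * real x + kE + kF * real x) * f x))"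
      by (simp add: ac_simps)
    have "w * (kb * f (Suc x) + kd * real x * f (x - 1) + kE
        + kF * real x * (\<Sum>y\<le>x. \<psi> x y * (f y * f (x - y))))
      \<le> w * ((kb + kd * real x + kE + kF * real x) * f x)"
      using compartment W_nonneg
      by (intro mult_left_mono) (simp_all add: w_def single_compartment_superharmonic_def)
    then show ?thesis
      unfolding jumps rhs by (rule mult_left_mono) simp
  next
    case False
    then show ?thesis by (simp add: not_in_iff)
  qed
  with inflow show ?thesis
    by (simp add: rate_summand_def psi_sum W_def algebra_simps)
qed

lemma suminf_rate_summand_prod_mset_less:
  fixes f :: "nat \<Rightarrow> real"
  assumes inflow: "0 < kI"
    and f_pos: "\<And>x. 0 < f x" and f_le: "\<And>x. f x \<le> s" and s_less: "s < 1"
    and compartment: "single_compartment_superharmonic f"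
  defines "W \<equiv> \<lambda>m. \<Prod>z\<in>#m. f z"
  shows "summable (rate_summand n W)"
    and "(\<Sum>x. rate_summand n W x) < (\<Sum>x. rate_summand n (\<lambda>_. 1) x) * W n"
proof -
  define a where "a = rate_summand n W"
  define r where "r = rate_summand n (\<lambda>_. 1)"
  have W_pos: "0 < W m" for m
    unfolding W_def by (induction m) (simp_all add: f_pos)
  have a_nonneg: "0 \<le> a x" for x
    unfolding a_def using W_pos by (intro rate_summand_nonneg) (simp add: less_imp_le)
  have drift: "a x + kI * (1 - s) * W n * \<mu> x \<le> r x * W n" for x
    using rate_summand_prod_mset_le[of f s n x] less_imp_le[OF f_pos] f_le compartment
    by (simp add: a_def r_def W_def ac_simps)
  have r_summable: "summable r"
    unfolding r_def by (rule summable_rate_summand_one)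
  have rW_summable: "summable (\<lambda>x. r x * W n)"
    using r_summable by (rule summable_mult2)
  show a_summable: "summable (rate_summand n W)"
    unfolding a_def[symmetric]
  proof (rule summable_comparison_test'[OF rW_summable])
    show "norm (a x) \<le> r x * W n" for x
      using drift[of x] a_nonneg[of x] inflow s_less W_pos[of n] mu_nonneg[of x]
      by (simp add: mult_nonneg_nonneg order_trans[rotated])
  qed
  have inflow_sums: "(\<lambda>x. kI * (1 - s) * W n * \<mu> x) sums (kI * (1 - s) * W n)"
    using sums_mult[OF mu_sums, of "kI * (1 - s) * W n"] by simp
  have "(\<Sum>x. a x) + kI * (1 - s) * W n = (\<Sum>x. a x + kI * (1 - s) * W n * \<mu> x)"
    using suminf_add[OF a_summable[folded a_def] sums_summable[OF inflow_sums]] inflow_sums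
    by (simp add: sums_iff)
  also have "\<dots> \<le> (\<Sum>x. r x * W n)"
    using drift a_summable[folded a_def] inflow_sums rW_summable
    by (intro suminf_le) (auto intro: summable_add sums_summable)
  also have "\<dots> = (\<Sum>x. r x) * W n"
    using suminf_mult2[OF r_summable] by simp
  finally have "(\<Sum>x. a x) + kI * (1 - s) * W n \<le> (\<Sum>x. r x) * W n" .
  moreover have "0 < kI * (1 - s) * W n"
    using inflow s_less W_pos[of n] by simp
  ultimately show "(\<Sum>x. rate_summand n W x) < (\<Sum>x. rate_summand n (\<lambda>_. 1) x) * W n"
    unfolding a_def r_def by linarith
qed

lemma jump_prob_prod_mset_less:
  fixes f :: "nat \<Rightarrow> real"
  assumes inflow: "0 < kI"
    and f_pos: "\<And>x. 0 < f x" and f_le: "\<And>x. f x \<le> s" and s_less: "s < 1"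
    and compartment: "single_compartment_superharmonic f"
  shows "(\<integral>\<^sup>+ m. P n m * ennreal (\<Prod>z\<in>#m. f z) \<partial>count_space UNIV) < ennreal (\<Prod>z\<in>#n. f z)"
proof -
  define W where "W = (\<lambda>m. \<Prod>z\<in>#m. f z)"
  let ?r = "\<Sum>x. rate_summand n (\<lambda>_. 1) x"
  have drift: "summable (rate_summand n W)" "(\<Sum>x. rate_summand n W x) < ?r * W n"
    using suminf_rate_summand_prod_mset_less[OF assms] by (simp_all add: W_def)
  have W_pos: "0 < W m" for m
    unfolding W_def by (induction m) (simp_all add: f_pos)
  have summand_nonneg: "0 \<le> rate_summand n W x" "0 \<le> rate_summand n (\<lambda>_. 1) x" for x
    using W_pos by (simp_all add: rate_summand_nonneg less_imp_le)
  have Q_integral: "(\<integral>\<^sup>+ m. Q n m * ind (m \<noteq> n) * ennreal (W m) \<partial>count_space UNIV)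
      = ennreal (\<Sum>x. rate_summand n W x)"
    using nn_integral_Q_eq_suminf[of W n] W_pos suminf_ennreal2[OF summand_nonneg(1) drift(1)]
    by (simp add: Q_mult_ind_neq_self less_imp_le)
  have q: "q n = ennreal ?r"
    using q_eq_suminf suminf_ennreal2[OF summand_nonneg(2) summable_rate_summand_one] by simp
  have "0 < ?r * W n"
    using drift(2) suminf_nonneg[OF drift(1) summand_nonneg(1)] by linarith
  then have r_pos: "0 < ?r"
    using W_pos[of n] by (simp add: zero_less_mult_iff)
  have "(\<integral>\<^sup>+ m. P n m * ennreal (W m) \<partial>count_space UNIV) < ennreal (W n)"
  proof (rule nn_integral_jump_prob_less)
    show "q n \<noteq> 0" "q n \<noteq> \<top>"
      using r_pos by (simp_all add: q)
    show "(\<integral>\<^sup>+ m. Q n m * ind (m \<noteq> n) * ennreal (W m) \<partial>count_space UNIV) < q n * ennreal (W n)"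
      unfolding Q_integral q using drift(2) W_pos[of n] r_pos
      by (simp add: ennreal_mult[symmetric] ennreal_lessI)
  qed
  then show ?thesis
    by (simp add: W_def)
qed

lemma two_level_weight_superharmonic:
  fixes f :: "nat \<Rightarrow> real"
  assumes f0: "f 0 = s0" and f_pos_arg: "\<And>x. 0 < x \<Longrightarrow> f x = s1"
    and s1_nonneg: "0 \<le> s1" and s1_le: "s1 \<le> s0"
    and empty_le: "kb * s1 + kE \<le> (kb + kE) * s0"
    and nonempty_le: "\<And>X. 1 \<le> X \<Longrightarrow>
      kb * s1 + kd * X * s0 + kE + kF * X * s0 * s1 \<le> (kb + kd * X + kE + kF * X) * s1"
  shows "single_compartment_superharmonic f"
  unfolding single_compartment_superharmonic_def
proof (intro allI)
  fix x
  show "kb * f (Suc x) + kd * real x * f (x - 1) + kE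
      + kF * real x * (\<Sum>y\<le>x. \<psi> x y * (f y * f (x - y)))
    \<le> (kb + kd * real x + kE + kF * real x) * f x"
  proof (cases "x = 0")
    case True
    then show ?thesis
      using empty_le by (simp add: f0 f_pos_arg)
  next
    case False
    have f_le: "f z \<le> s0" for z
      using s1_le by (cases "z = 0") (simp_all add: f0 f_pos_arg)
    have "f y * f (x - y) \<le> s0 * s1" if "y \<le> x" for y
    proof (cases "y = 0")
      case True
      then show ?thesis using False by (simp add: f0 f_pos_arg)
    next
      case False
      then show ?thesis
        using mult_left_mono[OF f_le[of "x - y"] s1_nonneg] by (simp add: f_pos_arg mult.commute)
    qed
    then have "(\<Sum>y\<le>x. \<psi> x y * (f y * f (x - y))) \<le> (\<Sum>y\<le>x. \<psi> x y * (s0 * s1))"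
      by (intro sum_mono mult_left_mono) (simp_all add: psi_nonneg)
    also have "\<dots> = s0 * s1"
      by (simp add: psi_sum flip: sum_distrib_right)
    finally have fragments: "kF * real x * (\<Sum>y\<le>x. \<psi> x y * (f y * f (x - y))) \<le> kF * real x * s0 * s1"
      using rates_nonneg by (simp add: mult_left_mono mult.assoc)
    have "kd * real x * f (x - 1) \<le> kd * real x * s0"
      using rates_nonneg f_le by (simp add: mult_left_mono)
    moreover have "kb * s1 + kd * real x * s0 + kE + kF * real x * s0 * s1
        \<le> (kb + kd * real x + kE + kF * real x) * s1"
      using False by (intro nonempty_le) simp
    ultimately show ?thesis
      using fragments False by (simp add: f_pos_arg)
  qed
qed

end

lemma two_level_weights_exist:
  fixes kb kd kE kF :: real
  assumes nonneg: "0 \<le> kb" "0 \<le> kd" "0 \<le> kE" "0 \<le> kF"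
    and cond: "(kE + kd) * kE < (kF - kE) * kb"
  obtains s0 s1 where "s0 < 1" "0 < s1" "s1 \<le> s0" "kb * s1 + kE \<le> (kb + kE) * s0"
    "\<And>X. 1 \<le> X \<Longrightarrow> kb * s1 + kd * X * s0 + kE + kF * X * s0 * s1 \<le> (kb + kd * X + kE + kF * X) * s1"
proof -
  define D where "D = (kF - kE) * kb - (kE + kd) * kE"
  have D_pos: "0 < D"
    using cond by (simp add: D_def)
  have kb_pos: "0 < kb"
  proof -
    have "0 \<le> (kE + kd) * kE"
      using nonneg by simp
    then have "kb \<noteq> 0"
      using cond by auto
    then show ?thesis
      using nonneg by simp
  qed
  have D_le: "D \<le> kF * kb"
    using nonneg by (simp add: D_def algebra_simps)
  define \<tau> where "\<tau> = D / (kF * kb + 1)"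
  define t where "t = \<tau> / (kb + kE)"
  have denom_pos: "0 < kF * kb + 1"
    using nonneg by (simp add: add_nonneg_pos)
  have \<tau>_pos: "0 < \<tau>"
    using D_pos denom_pos by (simp add: \<tau>_def)
  have \<tau>_less: "\<tau> < 1"
    using D_le denom_pos by (simp add: \<tau>_def)
  have \<tau>_le: "kF * kb * \<tau> \<le> D"
    using D_pos denom_pos by (simp add: \<tau>_def field_simps)
  have t_pos: "0 < t" and t_\<tau>: "t * (kb + kE) = \<tau>"
    using \<tau>_pos kb_pos nonneg by (simp_all add: t_def)
  \<comment> \<open>This choice makes the empty-compartment inequality an equality and reduces the
    other one to \<open>kF * kb * t * (kb + kE) \<le> D\<close>.\<close>
  define s0 where "s0 = 1 - t * kb"
  define s1 where "s1 = 1 - \<tau>"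
  show thesis
  proof
    show "0 < s1"
      using \<tau>_less by (simp add: s1_def)
    show "s0 < 1"
      using t_pos kb_pos by (simp add: s0_def)
    show "s1 \<le> s0"
      using t_pos nonneg by (simp add: s0_def s1_def flip: t_\<tau>)
    show "kb * s1 + kE \<le> (kb + kE) * s0"
      using t_\<tau> by (simp add: s0_def s1_def algebra_simps)
  next
    fix X :: real
    assume X: "1 \<le> X"
    have "kE * (kb + kE) \<le> X * (kF * kb * s1 - kd * kE)"
    proof -
      have "kE * (kb + kE) \<le> kF * kb * s1 - kd * kE"
        using \<tau>_le by (simp add: s1_def D_def algebra_simps)
      moreover have "0 \<le> kE * (kb + kE)"
        using nonneg by simp
      ultimately have "1 * (kF * kb * s1 - kd * kE) \<le> X * (kF * kb * s1 - kd * kE)"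
        using X by (intro mult_right_mono) simp_all
      with \<open>kE * (kb + kE) \<le> kF * kb * s1 - kd * kE\<close> show ?thesis
        by simp
    qed
    moreover have "(kb + kd * X + kE + kF * X) * s1 - (kb * s1 + kd * X * s0 + kE + kF * X * s0 * s1)
        = t * (X * (kF * kb * s1 - kd * kE) - kE * (kb + kE))"
      by (simp add: s0_def s1_def algebra_simps flip: t_\<tau>)
    ultimately have "0 \<le> (kb + kd * X + kE + kF * X) * s1 - (kb * s1 + kd * X * s0 + kE + kF * X * s0 * s1)"
      using t_pos by simp
    then show "kb * s1 + kd * X * s0 + kE + kF * X * s0 * s1 \<le> (kb + kd * X + kE + kF * X) * s1"
      by simp
  qed
qed

theorem proposition4p7:
  fixes kb kd kI kE kF kC :: real and \<mu> :: "nat \<Rightarrow> real" and \<psi> :: "nat \<Rightarrow> nat \<Rightarrow> real"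
  assumes nonneg: "kb \<ge> 0" "kd \<ge> 0" "kI \<ge> 0" "kE \<ge> 0" "kF \<ge> 0" "kC \<ge> 0"
    and mu_nonneg: "\<And>x. \<mu> x \<ge> 0"
    and mu_prob: "\<mu> sums 1"
    and mu_mean: "summable (\<lambda>x. real x * \<mu> x)"
    and psi_nonneg: "\<And>x y. \<psi> x y \<ge> 0"
    and psi_supp: "\<And>x y. y > x \<Longrightarrow> \<psi> x y = 0"
    and psi_prob: "\<And>x. (\<Sum>y\<le>x. \<psi> x y) = 1"
    and cond: "(kF - kE) * kb > (kE + kd) * kE"
    and inflow: "kI > 0"
    and nocoal: "kC = 0"
  shows "\<forall>n. transient_state (jump_prob kb kd kI kE kF kC \<mu> \<psi>) n"
proof -
  interpret compartment_model kb kd kI kE kF \<mu> \<psi>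
    using nonneg mu_nonneg mu_prob psi_nonneg psi_supp psi_prob by unfold_locales auto
  obtain s0 s1 where s: "s0 < 1" "0 < s1" "s1 \<le> s0" "kb * s1 + kE \<le> (kb + kE) * s0"
    "\<And>X. 1 \<le> X \<Longrightarrow> kb * s1 + kd * X * s0 + kE + kF * X * s0 * s1 \<le> (kb + kd * X + kE + kF * X) * s1"
    using two_level_weights_exist[OF nonneg(1,2,4,5) cond] by blast
  define f where "f x = (if x = 0 then s0 else s1)" for x :: nat
  have superharmonic: "(\<integral>\<^sup>+ m. P n m * ennreal (\<Prod>z\<in>#m. f z) \<partial>count_space UNIV) < ennreal (\<Prod>z\<in>#n. f z)"
    for n
  proof (rule jump_prob_prod_mset_less[OF inflow])
    show "0 < f x" "f x \<le> s0" for x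
      using s by (simp_all add: f_def)
    show "single_compartment_superharmonic f"
      using s by (intro two_level_weight_superharmonic[of f s0 s1]) (simp_all add: f_def)
  qed (use s in simp)
  show ?thesis
    unfolding nocoal
    by (intro allI transient_stateI_superharmonic[where g = "\<lambda>m. ennreal (\<Prod>z\<in>#m. f z)"]
        less_imp_le superharmonic)
qed

end
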